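(* There is an absolute constant $K$ such that for every integer $n \ge 1$ and every integer $c$ with $0 \le c < n$, there is a deterministic finite automaton with at most $K n^2$ states (not counting a dead state) accepting the language $$L_{n,c} = \{ x \times y \in (\{0,1\}\times\{0,1\})^* : x, y \text{ valid Fibonacci representations of equal length},\ [y] = n[x] + c \},$$ read most significant digit first.
   Context: Fibonacci numbers: $F_0=0$, $F_1=1$, $F_k=F_{k-1}+F_{k-2}$. For a binary word $x = x_1\cdots x_\ell$, $[x] = \sum_{j=1}^{\ell} x_j F_{\ell-j+2}$. A valid Fibonacci representation is a binary word with no factor $11$; leading zeros allowed. For words $x,y$ of equal length, $x\times y$ is the word over $\{0,1\}^2$ with first component $x$ and second component $y$. *)

theory Defs
  imports Main "HOL-Number_Theory.Fib"
begin

text \<open>Value of a binary word, most significant digit first: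
  [x] = sum_{j=1}^{l} x_j F_{l-j+2}; with 0-based index i = j-1 the weight is F_{l-i+1}.\<close>
definition fibval :: "bool list \<Rightarrow> nat" where
  "fibval x = (\<Sum>i<length x. (if x ! i then fib (length x - i + 1) else 0))"

definition valid_fib :: "bool list \<Rightarrow> bool" where
  "valid_fib x \<longleftrightarrow> (\<forall>i. Suc i < length x \<longrightarrow> \<not> (x ! i \<and> x ! Suc i))"

text \<open>The language L_{n,c}: words over {0,1} x {0,1}; the first components form x,
  the second components form y (automatically of equal length).\<close>
definition L :: "nat \<Rightarrow> nat \<Rightarrow> (bool \<times> bool) list set" where
  "L n c = {w. valid_fib (map fst w) \<and> valid_fib (map snd w) \<and>
               fibval (map snd w) = n * fibval (map fst w) + c}"

text \<open>Deterministic finite automata with a partial transition function; an undefined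
  transition (None) represents the implicit dead state, which is not counted in Q.\<close>
fun delta_star :: "('q \<Rightarrow> 'a \<Rightarrow> 'q option) \<Rightarrow> 'q \<Rightarrow> 'a list \<Rightarrow> 'q option" where
  "delta_star \<delta> q [] = Some q"
| "delta_star \<delta> q (a # w) = (case \<delta> q a of None \<Rightarrow> None | Some q' \<Rightarrow> delta_star \<delta> q' w)"

definition is_dfa :: "'q set \<Rightarrow> 'q \<Rightarrow> ('q \<Rightarrow> 'a \<Rightarrow> 'q option) \<Rightarrow> 'q set \<Rightarrow> bool" where
  "is_dfa Q q0 \<delta> F \<longleftrightarrow> finite Q \<and> q0 \<in> Q \<and> F \<subseteq> Q \<and>
     (\<forall>q\<in>Q. \<forall>a q'. \<delta> q a = Some q' \<longrightarrow> q' \<in> Q)"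

definition dfa_lang :: "'q \<Rightarrow> ('q \<Rightarrow> 'a \<Rightarrow> 'q option) \<Rightarrow> 'q set \<Rightarrow> 'a list set" where
  "dfa_lang q0 \<delta> F = {w. \<exists>q. delta_star \<delta> q0 w = Some q \<and> q \<in> F}"

end

theory Submission
  imports Defs "HOL-Library.Countable" "HOL-Library.Sublist"
begin

text \<open>
  After reading a prefix \<open>u\<close>, everything that matters about it is the pair of gaps
  \<open>a = [y] - n[x]\<close> and \<open>b = [y]' - n[x]'\<close>, where \<open>[-]'\<close> shifts all weights down by
  one, together with the last letter: for a suffix \<open>z\<close> of length \<open>m\<close> the whole word has
  gap \<open>a F(m+1) + b F(m) + (gap of z)\<close>.  Reading a letter maps \<open>(a, b)\<close> to
  \<open>(a + b + t, a + t)\<close> with \<open>|t| \<le> n\<close>, which turns \<open>a - \<phi> b\<close> into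
  \<open>(1 - \<phi>)(a - \<phi> b + t)\<close> for the golden ratio \<open>\<phi>\<close>; as \<open>|1 - \<phi>| < 2/3\<close>, always
  \<open>|a - \<phi> b| \<le> 2n\<close>.  If \<open>u\<close> can be
  completed to a word of \<open>L n c\<close>, the bound \<open>[z] < F(m+2)\<close> for valid \<open>z\<close> gives
  \<open>|a F(m+1) + b F(m)| \<le> 2n F(m+2)\<close>, and the two estimates confine \<open>(a, b)\<close> to
  \<open>[-10n, 10n] \<times> [-4n, 4n]\<close>.  The automaton tracks the gaps and the last letter and
  dies when it leaves this box.
\<close>

lemma valid_fib_Nil [simp]: "valid_fib []"
  by (simp add: valid_fib_def)

lemma valid_fib_singleton [simp]: "valid_fib [d]"
  by (simp add: valid_fib_def)

lemma valid_fib_Cons_Cons [simp]: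
  "valid_fib (d # e # x) \<longleftrightarrow> \<not> (d \<and> e) \<and> valid_fib (e # x)"
  unfolding valid_fib_def
proof (intro iffI conjI allI impI)
  fix i
  assume "\<forall>i. Suc i < length (d # e # x) \<longrightarrow> \<not> ((d # e # x) ! i \<and> (d # e # x) ! Suc i)"
  from this[rule_format, of 0] this[rule_format, of "Suc i"]
  show "\<not> (d \<and> e)" and "Suc i < length (e # x) \<Longrightarrow> \<not> ((e # x) ! i \<and> (e # x) ! Suc i)"
    by auto
next
  fix i
  assume "\<not> (d \<and> e) \<and> (\<forall>i. Suc i < length (e # x) \<longrightarrow> \<not> ((e # x) ! i \<and> (e # x) ! Suc i))"
    and "Suc i < length (d # e # x)"
  then show "\<not> ((d # e # x) ! i \<and> (d # e # x) ! Suc i)"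
    by (cases i) auto
qed

lemma valid_fib_snoc: "valid_fib (x @ [d]) \<longleftrightarrow> valid_fib x \<and> \<not> (last (False # x) \<and> d)"
  by (induction x rule: induct_list012) auto

lemma valid_fib_appendD: "valid_fib (x @ z) \<Longrightarrow> valid_fib z"
  unfolding valid_fib_def
proof (intro allI impI)
  fix i
  assume "\<forall>i. Suc i < length (x @ z) \<longrightarrow> \<not> ((x @ z) ! i \<and> (x @ z) ! Suc i)"
    and "Suc i < length z"
  from this(1)[rule_format, of "length x + i"] this(2)
  show "\<not> (z ! i \<and> z ! Suc i)"
    by (simp add: nth_append)
qed

definition fibval_shift :: "bool list \<Rightarrow> nat" where
  "fibval_shift x = (\<Sum>i<length x. if x ! i then fib (length x - i) else 0)"

lemma fibval_Nil [simp]: "fibval [] = 0"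
  by (simp add: fibval_def)

lemma fibval_shift_Nil [simp]: "fibval_shift [] = 0"
  by (simp add: fibval_shift_def)

lemma fibval_snoc: "fibval (x @ [d]) = fibval x + fibval_shift x + of_bool d"
proof -
  have "fibval (x @ [d])
      = (\<Sum>i<length x. if x ! i then fib (length x - i + 2) else 0) + of_bool d"
    unfolding fibval_def length_append_singleton sum.lessThan_Suc
    by (auto simp: nth_append Suc_diff_le intro!: sum.cong)
  also have "(\<Sum>i<length x. if x ! i then fib (length x - i + 2) else 0)
      = (\<Sum>i<length x. (if x ! i then fib (length x - i + 1) else 0)
                      + (if x ! i then fib (length x - i) else 0))"
    by (rule sum.cong) (simp_all add: fib_plus_2)
  finally show ?thesis
    unfolding fibval_def fibval_shift_def by (simp add: sum.distrib)
qed

lemma fibval_shift_snoc: "fibval_shift (x @ [d]) = fibval x + of_bool d"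
  unfolding fibval_def fibval_shift_def length_append_singleton sum.lessThan_Suc
  by (auto simp: nth_append Suc_diff_le intro!: sum.cong)

lemma fibval_Cons: "fibval (d # z) = of_bool d * fib (length z + 2) + fibval z"
  unfolding fibval_def length_Cons sum.lessThan_Suc_shift by (auto intro!: sum.cong)

lemma fibval_append:
  "fibval (x @ z) = fibval x * fib (length z + 1) + fibval_shift x * fib (length z) + fibval z"
proof (induction z arbitrary: x)
  case Nil
  then show ?case by simp
next
  case (Cons d z)
  have "fibval (x @ d # z) = fibval ((x @ [d]) @ z)"
    by simp
  also have "\<dots> = fibval (x @ [d]) * fib (length z + 1) + fibval_shift (x @ [d]) * fib (length z)
      + fibval z"
    by (rule Cons.IH)
  also have "\<dots> = fibval x * fib (length (d # z) + 1) + fibval_shift x * fib (length (d # z))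
      + fibval (d # z)"
    by (simp add: fibval_snoc fibval_shift_snoc fibval_Cons fib_plus_2 algebra_simps)
  finally show ?case .
qed

lemma fibval_less_fib: "valid_fib z \<Longrightarrow> fibval z < fib (length z + 2)"
proof (induction z rule: induct_list012)
  case 1
  then show ?case by simp
next
  case (2 d)
  then show ?case by (simp add: fibval_Cons numeral_3_eq_3)
next
  case (3 d e z)
  have ih: "fibval (e # z) < fib (length z + 3)"
    using "3.IH"(2) "3.prems" by (simp add: numeral_3_eq_3)
  show ?case
  proof (cases d)
    case True
    have "valid_fib z"
      using valid_fib_appendD[of "[d, e]" z] "3.prems" by simp
    with True "3.IH"(1) "3.prems" have "\<not> e" and "fibval z < fib (length z + 2)"
      by auto
    with True show ?thesis
      by (simp add: fibval_Cons fib_plus_2[of "length z + 2"])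
  next
    case False
    have "fib (length z + 3) \<le> fib (length z + 4)"
      by (rule fib_mono) simp
    moreover have "fibval (d # e # z) = fibval (e # z)"
      using False fibval_Cons[of d "e # z"] by simp
    moreover have "length (d # e # z) + 2 = length z + 4"
      by simp
    ultimately show ?thesis
      using ih by (metis order_less_le_trans)
  qed
qed

definition digit_gap :: "nat \<Rightarrow> bool \<times> bool \<Rightarrow> int" where
  "digit_gap n p = of_bool (snd p) - int n * of_bool (fst p)"

definition fib_gap :: "nat \<Rightarrow> (bool \<times> bool) list \<Rightarrow> int" where
  "fib_gap n w = int (fibval (map snd w)) - int n * int (fibval (map fst w))"

definition fib_gap_shift :: "nat \<Rightarrow> (bool \<times> bool) list \<Rightarrow> int" where
  "fib_gap_shift n w = int (fibval_shift (map snd w)) - int n * int (fibval_shift (map fst w))"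

lemma abs_digit_gap_le: "1 \<le> n \<Longrightarrow> \<bar>digit_gap n p\<bar> \<le> int n"
  by (auto simp: digit_gap_def)

lemma fib_gap_Nil [simp]: "fib_gap n [] = 0"
  by (simp add: fib_gap_def)

lemma fib_gap_shift_Nil [simp]: "fib_gap_shift n [] = 0"
  by (simp add: fib_gap_shift_def)

lemma fib_gap_snoc: "fib_gap n (w @ [p]) = fib_gap n w + fib_gap_shift n w + digit_gap n p"
  by (simp add: fib_gap_def fib_gap_shift_def digit_gap_def fibval_snoc algebra_simps)

lemma fib_gap_shift_snoc: "fib_gap_shift n (w @ [p]) = fib_gap n w + digit_gap n p"
  by (simp add: fib_gap_def fib_gap_shift_def digit_gap_def fibval_shift_snoc algebra_simps)

lemma fib_gap_append:
  "fib_gap n (u @ z) = fib_gap n u * fib (length z + 1) + fib_gap_shift n u * fib (length z)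
     + fib_gap n z"
  by (simp add: fib_gap_def fib_gap_shift_def fibval_append algebra_simps)

lemma fib_gap_eq_iff: "fib_gap n w = int c \<longleftrightarrow> fibval (map snd w) = n * fibval (map fst w) + c"
  unfolding fib_gap_def of_nat_mult[symmetric] by linarith

definition golden_ratio :: real where
  "golden_ratio = (1 + sqrt 5) / 2"

lemma golden_ratio_square: "golden_ratio\<^sup>2 = golden_ratio + 1"
  by (simp add: golden_ratio_def power2_eq_square field_simps)

lemma golden_ratio_gt_1: "1 < golden_ratio"
  by (simp add: golden_ratio_def)

lemma golden_ratio_le: "golden_ratio \<le> 5 / 3"
proof -
  have "sqrt 5 \<le> sqrt ((7 / 3)\<^sup>2)"
    by (rule real_sqrt_le_mono) (simp add: power2_eq_square)
  then show ?thesis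
    by (simp add: golden_ratio_def)
qed

lemma golden_step_bound:
  fixes a b t N :: real
  assumes "\<bar>a - golden_ratio * b\<bar> \<le> 2 * N" and "\<bar>t\<bar> \<le> N"
  shows "\<bar>(a + b + t) - golden_ratio * (a + t)\<bar> \<le> 2 * N"
proof -
  have "(1 - golden_ratio) * (a - golden_ratio * b + t)
      = (a + b + t) - golden_ratio * (a + t) + (golden_ratio\<^sup>2 - golden_ratio - 1) * b"
    by (simp add: algebra_simps power2_eq_square)
  then have "(a + b + t) - golden_ratio * (a + t) = (1 - golden_ratio) * (a - golden_ratio * b + t)"
    by (simp add: golden_ratio_square)
  then have "\<bar>(a + b + t) - golden_ratio * (a + t)\<bar>
      = (golden_ratio - 1) * \<bar>a - golden_ratio * b + t\<bar>"
    using golden_ratio_gt_1 by (simp add: abs_mult)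
  also have "\<dots> \<le> (2 / 3) * (3 * N)"
    using assms golden_ratio_gt_1 golden_ratio_le by (intro mult_mono) auto
  finally show ?thesis
    by simp
qed

lemma fib_gap_golden_bound:
  assumes "1 \<le> n"
  shows "\<bar>fib_gap n w - golden_ratio * fib_gap_shift n w\<bar> \<le> 2 * real n"
proof (induction w rule: rev_induct)
  case Nil
  then show ?case by simp
next
  case (snoc p w)
  have "\<bar>real_of_int (digit_gap n p)\<bar> \<le> real n"
    using abs_digit_gap_le[OF assms, of p] by linarith
  with snoc.IH show ?case
    unfolding fib_gap_snoc fib_gap_shift_snoc of_int_add by (rule golden_step_bound)
qed

lemma golden_box_bound:
  fixes a b F1 F0 N :: real
  assumes golden: "\<bar>a - golden_ratio * b\<bar> \<le> 2 * N"
    and lin: "\<bar>a * F1 + b * F0\<bar> \<le> 2 * N * (F1 + F0)"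
    and F: "0 \<le> F0" "0 \<le> F1" "0 < F1 + F0"
  shows "\<bar>b\<bar> \<le> 4 * N" and "\<bar>a\<bar> \<le> 10 * N"
proof -
  define r where "r = a - golden_ratio * b"
  have N: "0 \<le> N"
    using golden by linarith
  have F1_le: "F1 + F0 \<le> golden_ratio * F1 + F0"
    using mult_right_mono[of 1 golden_ratio F1] golden_ratio_gt_1 F by simp
  have "\<bar>b\<bar> * (F1 + F0) \<le> \<bar>b\<bar> * (golden_ratio * F1 + F0)"
    using F1_le by (simp add: mult_left_mono)
  also have "\<dots> = \<bar>b * (golden_ratio * F1 + F0)\<bar>"
    using F1_le F by (simp add: abs_mult)
  also have "\<dots> = \<bar>(a * F1 + b * F0) - r * F1\<bar>"
    by (rule arg_cong[where f = abs]) (simp add: r_def algebra_simps)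
  also have "\<dots> \<le> 2 * N * (F1 + F0) + 2 * N * F1"
  proof -
    have "\<bar>r * F1\<bar> \<le> 2 * N * F1"
      using golden F by (simp add: r_def abs_mult mult_right_mono)
    then show ?thesis
      using lin abs_triangle_ineq4[of "a * F1 + b * F0" "r * F1"] by linarith
  qed
  also have "\<dots> \<le> 4 * N * (F1 + F0)"
    using N F by (simp add: algebra_simps)
  finally show b: "\<bar>b\<bar> \<le> 4 * N"
    using F(3) by simp
  have "\<bar>a\<bar> \<le> \<bar>a - golden_ratio * b\<bar> + \<bar>golden_ratio * b\<bar>"
    using abs_triangle_ineq[of "a - golden_ratio * b" "golden_ratio * b"] by simp
  also have "\<dots> \<le> golden_ratio * \<bar>b\<bar> + 2 * N"
    using golden golden_ratio_gt_1 by (simp add: abs_mult)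
  also have "golden_ratio * \<bar>b\<bar> \<le> (5 / 3) * (4 * N)"
    using golden_ratio_le golden_ratio_gt_1 b by (intro mult_mono) auto
  finally show "\<bar>a\<bar> \<le> 10 * N"
    by simp
qed

lemma L_append_fib_gap:
  assumes "u @ z \<in> L n c"
  shows "fib_gap n u * fib (length z + 1) + fib_gap_shift n u * fib (length z)
    = int c - fib_gap n z"
  using assms fib_gap_append[of n u z] unfolding L_def fib_gap_def by simp

lemma L_suffix_fib_gap_bound:
  assumes w: "u @ z \<in> L n c" and "c < n"
  shows "\<bar>int c - fib_gap n z\<bar> \<le> 2 * int n * fib (length z + 2)"
proof -
  define G where "G = int (fib (length z + 2))"
  have "valid_fib (map fst u @ map fst z)" "valid_fib (map snd u @ map snd z)"
    using w by (simp_all add: L_def)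
  then have "valid_fib (map fst z)" "valid_fib (map snd z)"
    by (auto dest: valid_fib_appendD)
  then have X: "int (fibval (map fst z)) \<le> G" and Y: "int (fibval (map snd z)) \<le> G"
    unfolding G_def by (metis fibval_less_fib length_map less_imp_le of_nat_le_iff)+
  have "int n * int (fibval (map fst z)) \<le> int n * G"
    using X by (simp add: mult_left_mono)
  moreover have "G \<le> int n * G"
    using \<open>c < n\<close> mult_right_mono[of 1 "int n" G] unfolding G_def by simp
  moreover have "int n \<le> int n * G"
    using fib_neq_0_nat[of "length z + 2"] mult_left_mono[of 1 G "int n"] unfolding G_def
    by linarith
  moreover have "0 \<le> int n * int (fibval (map fst z))"
    by simp
  ultimately have "\<bar>int c - fib_gap n z\<bar> \<le> 2 * (int n * G)"
    using Y \<open>c < n\<close> unfolding fib_gap_def abs_le_iff by linarith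
  then show ?thesis
    by (simp add: G_def mult.assoc)
qed

lemma L_prefix_fib_gap_bound:
  assumes w: "u @ z \<in> L n c" and n: "1 \<le> n" and "c < n"
  shows "\<bar>fib_gap_shift n u\<bar> \<le> 4 * int n \<and> \<bar>fib_gap n u\<bar> \<le> 10 * int n"
proof -
  define F1 F0 where "F1 = real (fib (length z + 1))" and "F0 = real (fib (length z))"
  have F: "0 \<le> F0" "0 \<le> F1" "0 < F1 + F0"
    using fib_neq_0_nat[of "length z + 1"] by (simp_all add: F1_def F0_def)
  have "real_of_int (fib_gap n u) * F1 + real_of_int (fib_gap_shift n u) * F0
      = real_of_int (int c - fib_gap n z)"
    unfolding F1_def F0_def L_append_fib_gap[OF w, symmetric] by simp
  moreover have "\<bar>real_of_int (int c - fib_gap n z)\<bar> \<le> 2 * real n * (F1 + F0)"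
  proof -
    have "real_of_int \<bar>int c - fib_gap n z\<bar> \<le> real_of_int (2 * int n * fib (length z + 2))"
      using L_suffix_fib_gap_bound[OF w \<open>c < n\<close>] by (simp only: of_int_le_iff)
    then show ?thesis
      by (simp add: F1_def F0_def fib_plus_2)
  qed
  ultimately have "\<bar>fib_gap_shift n u\<bar> \<le> 4 * real n \<and> \<bar>fib_gap n u\<bar> \<le> 10 * real n"
    using golden_box_bound[OF fib_gap_golden_bound[OF n] _ F] by simp
  then show ?thesis
    by linarith
qed

lemma delta_star_snoc:
  "delta_star \<delta> q (w @ [a]) = (case delta_star \<delta> q w of None \<Rightarrow> None | Some q' \<Rightarrow> \<delta> q' a)"
  by (induction w arbitrary: q) (auto split: option.split)

lemma delta_star_tracks:
  assumes "P []"
    and "\<And>w a. P (w @ [a]) \<Longrightarrow> P w"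
    and "\<And>w a. P w \<Longrightarrow> \<delta> (f w) a = (if P (w @ [a]) then Some (f (w @ [a])) else None)"
  shows "delta_star \<delta> (f []) w = (if P w then Some (f w) else None)"
  by (induction w rule: rev_induct) (use assms in \<open>auto simp: delta_star_snoc\<close>)

lemma dfa_nat_states:
  fixes Q :: "'q::countable set"
  assumes "is_dfa Q q0 \<delta> F"
  shows "\<exists>(Q' :: nat set) q0' \<delta>' F'. is_dfa Q' q0' \<delta>' F' \<and> card Q' = card Q
    \<and> dfa_lang q0' \<delta>' F' = dfa_lang q0 \<delta> F"
proof (intro exI conjI)
  let ?\<delta> = "\<lambda>q a. map_option to_nat (\<delta> (from_nat q) a)"
  have run: "delta_star ?\<delta> (to_nat q) w = map_option to_nat (delta_star \<delta> q w)" for q w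
    by (induction w arbitrary: q) (auto split: option.split)
  show "is_dfa (to_nat ` Q) (to_nat q0) ?\<delta> (to_nat ` F)"
    using assms by (auto simp: is_dfa_def)
  show "card (to_nat ` Q) = card Q"
    by (simp add: card_image inj_on_def)
  show "dfa_lang (to_nat q0) ?\<delta> (to_nat ` F) = dfa_lang q0 \<delta> F"
    by (auto simp: dfa_lang_def run)
qed

definition fib_box :: "nat \<Rightarrow> (int \<times> int \<times> bool \<times> bool) set" where
  "fib_box n = {-10 * int n..10 * int n} \<times> {-4 * int n..4 * int n} \<times> UNIV"

lemma card_fib_box: "1 \<le> n \<Longrightarrow> real (card (fib_box n)) \<le> 756 * real n ^ 2"
proof -
  assume n: "1 \<le> n"
  have "card (UNIV :: (bool \<times> bool) set) = 4"
    by (simp add: card_UNIV_bool card_cartesian_product flip: UNIV_Times_UNIV)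
  then have "card (fib_box n) = (20 * n + 1) * ((8 * n + 1) * 4)"
    by (simp add: fib_box_def card_cartesian_product nat_add_distrib nat_mult_distrib)
  then have "real (card (fib_box n)) = (20 * real n + 1) * ((8 * real n + 1) * 4)"
    by (simp add: algebra_simps)
  also have "\<dots> \<le> (21 * real n) * ((9 * real n) * 4)"
    using n by (intro mult_mono) auto
  finally show ?thesis
    by (simp add: power2_eq_square)
qed

text \<open>The last letter is kept to forbid a factor \<open>11\<close>; \<open>(False, False)\<close> stands in for
  the last letter of the empty word.\<close>
definition fib_state :: "nat \<Rightarrow> (bool \<times> bool) list \<Rightarrow> int \<times> int \<times> bool \<times> bool" where
  "fib_state n w = (fib_gap n w, fib_gap_shift n w, last ((False, False) # w))"

lemma fst_fib_state [simp]: "fst (fib_state n w) = fib_gap n w"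
  by (simp add: fib_state_def)

fun fib_step ::
  "nat \<Rightarrow> int \<times> int \<times> bool \<times> bool \<Rightarrow> bool \<times> bool \<Rightarrow> (int \<times> int \<times> bool \<times> bool) option"
where
  "fib_step n (a, b, lx, ly) p =
    (let s = (a + b + digit_gap n p, a + digit_gap n p, p) in
     if \<not> (lx \<and> fst p) \<and> \<not> (ly \<and> snd p) \<and> s \<in> fib_box n then Some s else None)"

definition fib_final :: "nat \<Rightarrow> nat \<Rightarrow> (int \<times> int \<times> bool \<times> bool) set" where
  "fib_final n c = {s \<in> fib_box n. fst s = int c}"

lemma mem_fib_final: "s \<in> fib_final n c \<longleftrightarrow> s \<in> fib_box n \<and> fst s = int c"
  by (simp add: fib_final_def)

definition fib_alive :: "nat \<Rightarrow> (bool \<times> bool) list \<Rightarrow> bool" where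
  "fib_alive n w \<longleftrightarrow> valid_fib (map fst w) \<and> valid_fib (map snd w)
     \<and> (\<forall>u. prefix u w \<longrightarrow> fib_state n u \<in> fib_box n)"

lemma fib_state_Nil: "fib_state n [] = (0, 0, False, False)"
  by (simp add: fib_state_def)

lemma fib_state_Nil_in_fib_box: "fib_state n [] \<in> fib_box n"
  by (simp add: fib_state_Nil fib_box_def)

lemma is_dfa_fib: "is_dfa (fib_box n) (fib_state n []) (fib_step n) (fib_final n c)"
proof -
  have "fib_step n s p = Some s' \<Longrightarrow> s' \<in> fib_box n" for s p s'
    by (cases s) (auto simp: Let_def split: if_splits)
  moreover have "finite (fib_box n)"
    by (simp add: fib_box_def)
  ultimately show ?thesis
    using fib_state_Nil_in_fib_box by (auto simp: is_dfa_def fib_final_def)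
qed

lemma fib_alive_snoc:
  "fib_alive n (w @ [p]) \<longleftrightarrow> fib_alive n w \<and> \<not> (fst (last ((False, False) # w)) \<and> fst p)
     \<and> \<not> (snd (last ((False, False) # w)) \<and> snd p) \<and> fib_state n (w @ [p]) \<in> fib_box n"
proof -
  have "last (False # map f w) = f (last ((False, False) # w))" if "f (False, False) = False" for f
    using that by (induction w rule: rev_induct) auto
  then show ?thesis
    by (auto simp: fib_alive_def valid_fib_snoc prefix_snoc)
qed

lemma delta_star_fib_step:
  "delta_star (fib_step n) (fib_state n []) w = (if fib_alive n w then Some (fib_state n w) else None)"
proof (rule delta_star_tracks)
  show "fib_alive n []"
    using fib_state_Nil_in_fib_box by (simp add: fib_alive_def)
  show "fib_alive n w" if "fib_alive n (w @ [p])" for w p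
    using that by (simp add: fib_alive_snoc)
  show "fib_step n (fib_state n w) p
      = (if fib_alive n (w @ [p]) then Some (fib_state n (w @ [p])) else None)"
    if "fib_alive n w" for w p
  proof -
    obtain lx ly where "last ((False, False) # w) = (lx, ly)"
      by (cases "last ((False, False) # w)")
    with that show ?thesis
      by (simp add: fib_alive_snoc fib_state_def fib_gap_snoc fib_gap_shift_snoc Let_def)
  qed
qed

lemma L_fib_alive:
  assumes "w \<in> L n c" and "1 \<le> n" "c < n"
  shows "fib_alive n w"
proof -
  have "fib_state n u \<in> fib_box n" if "prefix u w" for u
  proof -
    from that obtain z where "w = u @ z"
      by (auto simp: prefix_def)
    with assms have "\<bar>fib_gap_shift n u\<bar> \<le> 4 * int n \<and> \<bar>fib_gap n u\<bar> \<le> 10 * int n"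
      using L_prefix_fib_gap_bound by blast
    then show ?thesis
      by (simp add: fib_state_def fib_box_def abs_le_iff)
  qed
  with assms show ?thesis
    by (simp add: fib_alive_def L_def)
qed

lemma dfa_lang_fib_step:
  assumes "1 \<le> n" "c < n"
  shows "dfa_lang (fib_state n []) (fib_step n) (fib_final n c) = L n c"
proof (intro set_eqI)
  fix w
  have "w \<in> dfa_lang (fib_state n []) (fib_step n) (fib_final n c)
      \<longleftrightarrow> fib_alive n w \<and> fib_state n w \<in> fib_final n c"
    by (simp add: dfa_lang_def delta_star_fib_step del: split_paired_Ex)
  also have "\<dots> \<longleftrightarrow> fib_alive n w \<and> fib_gap n w = int c"
    by (auto simp: fib_alive_def mem_fib_final)
  also have "\<dots> \<longleftrightarrow> w \<in> L n c"
    using L_fib_alive[OF _ assms] by (auto simp: fib_alive_def L_def fib_gap_eq_iff)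
  finally show "w \<in> dfa_lang (fib_state n []) (fib_step n) (fib_final n c) \<longleftrightarrow> w \<in> L n c" .
qed

theorem theorem7:
  shows "\<exists>K::real. \<forall>n::nat. \<forall>c::nat. n \<ge> 1 \<and> c < n \<longrightarrow>
     (\<exists>(Q::nat set) q0 \<delta> F. is_dfa Q q0 \<delta> F \<and> real (card Q) \<le> K * real n ^ 2 \<and>
        dfa_lang q0 \<delta> F = L n c)"
proof (rule exI[of _ 756], intro allI impI)
  fix n c :: nat
  assume "n \<ge> 1 \<and> c < n"
  then have n: "1 \<le> n" and c: "c < n"
    by auto
  obtain Q :: "nat set" and q0 \<delta> F where dfa: "is_dfa Q q0 \<delta> F"
    and card: "card Q = card (fib_box n)"
    and lang: "dfa_lang q0 \<delta> F = dfa_lang (fib_state n []) (fib_step n) (fib_final n c)"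
    using dfa_nat_states[OF is_dfa_fib] by blast
  have "real (card Q) \<le> 756 * real n ^ 2"
    using card card_fib_box[OF n] by simp
  with dfa lang dfa_lang_fib_step[OF n c]
  show "\<exists>(Q::nat set) q0 \<delta> F. is_dfa Q q0 \<delta> F \<and> real (card Q) \<le> 756 * real n ^ 2 \<and>
      dfa_lang q0 \<delta> F = L n c"
    by blast
qed

end
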